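(* Let $\sigma\subset N_{\mathbb{Q}}$ be a strongly convex polyhedral cone, $n=\dim N_{\mathbb{Q}}$, and $P\in\operatorname{Pol}_{\sigma^\vee}(M)$. Then for every positive integer $e\ge n-1$ the polyhedron $eP$ is normal. In particular, every $\mathbb{T}$-stable integrally closed ideal of an affine toric surface $\operatorname{Spec}\mathbf{k}[\sigma^\vee\cap M]$ is normal.
   Context: $\mathbf{k}$ is algebraically closed of characteristic $0$; $M,N$ dual lattices. $\operatorname{Pol}_{\sigma^\vee}(M)$ is the set of polyhedra $P=Q+\sigma^\vee\subset M_{\mathbb{Q}}$ with $Q$ a polytope whose vertices lie in $M$. For $e\ge1$, $eP$ is the image of $P$ under the homothety of ratio $e$. $P$ is normal if for every integer $e\ge1$, $(eP)\cap M=\{m_1+\dots+m_e: m_1,\dots,m_e\in P\cap M\}$. An ideal $I$ of a domain is normal if $I^i$ is integrally closed for all $i\ge1$. *)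

theory Defs
  imports "HOL-Analysis.Finite_Cartesian_Product"
begin

text \<open>M_Q = N_Q = rat^'n (n = CARD('n)); M = N = integer points; the pairing is the
standard dot product.\<close>

definition lattice_pts :: "(rat ^ 'n) set" where
  "lattice_pts = {m. \<forall>i. m $ i \<in> \<int>}"

definition qpair :: "rat ^ 'n \<Rightarrow> rat ^ 'n \<Rightarrow> rat" where
  "qpair m u = (\<Sum>i\<in>UNIV. m $ i * u $ i)"

definition cone_gen :: "(rat ^ 'n) set \<Rightarrow> (rat ^ 'n) set" where
  "cone_gen S = {x. \<exists>c. (\<forall>v\<in>S. c v \<ge> 0) \<and> x = (\<Sum>v\<in>S. c v *s v)}"

definition polyhedral_cone :: "(rat ^ 'n) set \<Rightarrow> bool" where
  "polyhedral_cone \<sigma> \<longleftrightarrow> (\<exists>S. finite S \<and> \<sigma> = cone_gen S)"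

definition strongly_convex :: "(rat ^ 'n) set \<Rightarrow> bool" where
  "strongly_convex \<sigma> \<longleftrightarrow> (\<forall>x. x \<in> \<sigma> \<and> - x \<in> \<sigma> \<longrightarrow> x = 0)"

definition dual_cone :: "(rat ^ 'n) set \<Rightarrow> (rat ^ 'n) set" where
  "dual_cone \<sigma> = {m. \<forall>u\<in>\<sigma>. qpair m u \<ge> 0}"

definition qconv_hull :: "(rat ^ 'n) set \<Rightarrow> (rat ^ 'n) set" where
  "qconv_hull V = {x. \<exists>c. (\<forall>v\<in>V. c v \<ge> 0) \<and> (\<Sum>v\<in>V. c v) = 1 \<and> x = (\<Sum>v\<in>V. c v *s v)}"

text \<open>A polytope whose vertices lie in M is the convex hull of a finite nonempty set of lattice points.\<close>
definition lattice_polytope :: "(rat ^ 'n) set \<Rightarrow> bool" where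
  "lattice_polytope Q \<longleftrightarrow> (\<exists>V. finite V \<and> V \<noteq> {} \<and> V \<subseteq> lattice_pts \<and> Q = qconv_hull V)"

definition Pol :: "(rat ^ 'n) set \<Rightarrow> (rat ^ 'n) set set" where
  "Pol \<sigma> = {P. \<exists>Q. lattice_polytope Q \<and> P = {q + s | q s. q \<in> Q \<and> s \<in> dual_cone \<sigma>}}"

definition scale_poly :: "nat \<Rightarrow> (rat ^ 'n) set \<Rightarrow> (rat ^ 'n) set" where
  "scale_poly e P = (\<lambda>x. of_nat e *s x) ` P"

definition normal_poly :: "(rat ^ 'n) set \<Rightarrow> bool" where
  "normal_poly P \<longleftrightarrow> (\<forall>k::nat. k \<ge> 1 \<longrightarrow>
     scale_poly k P \<inter> lattice_pts =
       {(\<Sum>i<k. m i) | m. \<forall>i<k. m i \<in> P \<inter> lattice_pts})"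

end

(*
  The core is the lattice polytope case (Bruns, Gubeladze and Trung). Let Q = conv V be a
  lattice polytope in dimension n and c >= n. Write a lattice point x of cQ as a positive
  combination of a set T of lattice points of Q, choosing T to minimise the number of lattice
  points of conv T and then #T. Minimality makes T affinely independent (Caratheodory), so
  #T <= n + 1. If some coefficient is at least 1, subtracting that point leaves a lattice
  point of (c - 1)Q. Otherwise the coefficients sum to c < #T, so #T = c + 1 and
  w = (sum of T) - x is a lattice point of conv T with all barycentric coordinates positive;
  pulling the simplex T towards w yields a representation of x over a set with fewer lattice
  points in its hull, contradicting minimality. Peeling off lattice points of Q one at a time
  shows that eQ is normal as soon as e >= n - 1.

  For P = Q + sigma^vee only the convexity of the cone sigma^vee is used.
*)

theory Submission
  imports Defs "HOL-Analysis.Cartesian_Space"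
begin

section \<open>Nonnegative combinations with prescribed total weight\<close>

text \<open>For nonempty \<open>V\<close> and \<open>a \<ge> 0\<close>, \<open>nonneg_combs V a\<close> is the dilate \<open>a \<cdot> conv V\<close>.\<close>

definition nonneg_combs :: "('a::linordered_field ^ 'n) set \<Rightarrow> 'a \<Rightarrow> ('a ^ 'n) set" where
  "nonneg_combs V a = {x. \<exists>c. (\<forall>v\<in>V. 0 \<le> c v) \<and> sum c V = a \<and> x = (\<Sum>v\<in>V. c v *s v)}"

lemma nonneg_combsI:
  "\<forall>v\<in>V. 0 \<le> c v \<Longrightarrow> sum c V = a \<Longrightarrow> x = (\<Sum>v\<in>V. c v *s v) \<Longrightarrow> x \<in> nonneg_combs V a"
  unfolding nonneg_combs_def by blast

lemma nonneg_combsE: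
  assumes "x \<in> nonneg_combs V a"
  obtains c where "\<forall>v\<in>V. 0 \<le> c v" "sum c V = a" "x = (\<Sum>v\<in>V. c v *s v)"
  using assms unfolding nonneg_combs_def by blast

lemma qconv_hull_eq_nonneg_combs: "qconv_hull V = nonneg_combs V 1"
  unfolding qconv_hull_def nonneg_combs_def by simp

lemma zero_in_nonneg_combs: "0 \<in> nonneg_combs V 0"
  by (rule nonneg_combsI[where c = "\<lambda>_. 0"]) auto

lemma nonneg_combs_add:
  assumes "x \<in> nonneg_combs V a" "y \<in> nonneg_combs V b"
  shows "x + y \<in> nonneg_combs V (a + b)"
proof -
  obtain c where c: "\<forall>v\<in>V. 0 \<le> c v" "sum c V = a" "x = (\<Sum>v\<in>V. c v *s v)"
    using assms(1) by (rule nonneg_combsE)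
  obtain d where d: "\<forall>v\<in>V. 0 \<le> d v" "sum d V = b" "y = (\<Sum>v\<in>V. d v *s v)"
    using assms(2) by (rule nonneg_combsE)
  show ?thesis
    by (rule nonneg_combsI[where c = "\<lambda>v. c v + d v"])
      (use c d in \<open>auto simp: sum.distrib vector_sadd_rdistrib\<close>)
qed

lemma nonneg_combs_scale:
  assumes "x \<in> nonneg_combs V a" "0 \<le> r"
  shows "r *s x \<in> nonneg_combs V (r * a)"
proof -
  obtain c where c: "\<forall>v\<in>V. 0 \<le> c v" "sum c V = a" "x = (\<Sum>v\<in>V. c v *s v)"
    using assms(1) by (rule nonneg_combsE)
  show ?thesis
    by (rule nonneg_combsI[where c = "\<lambda>v. r * c v"])
      (use c assms(2) in \<open>auto simp: sum_distrib_left vec.scale_sum_right\<close>)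
qed

lemma nonneg_combs_sum:
  assumes "finite I" "\<forall>i\<in>I. f i \<in> nonneg_combs V (a i)"
  shows "sum f I \<in> nonneg_combs V (sum a I)"
  using assms by (induction I rule: finite_induct) (auto intro: zero_in_nonneg_combs nonneg_combs_add)

lemma nonneg_combs_mono:
  assumes "finite V'" "V \<subseteq> V'"
  shows "nonneg_combs V a \<subseteq> nonneg_combs V' a"
proof
  fix x assume "x \<in> nonneg_combs V a"
  then obtain c where c: "\<forall>v\<in>V. 0 \<le> c v" "sum c V = a" "x = (\<Sum>v\<in>V. c v *s v)"
    by (rule nonneg_combsE)
  let ?d = "\<lambda>v. if v \<in> V then c v else 0"
  have "sum ?d V' = sum c V" "(\<Sum>v\<in>V'. ?d v *s v) = (\<Sum>v\<in>V. c v *s v)"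
    by (rule sum.mono_neutral_cong_right; use assms in auto)+
  then show "x \<in> nonneg_combs V' a"
    by (intro nonneg_combsI[where c = ?d]) (use c in auto)
qed

lemma sum_delta_scale:
  fixes T :: "('a::semiring_1 ^ 'n) set"
  assumes "finite T" "t0 \<in> T"
  shows "(\<Sum>t\<in>T. (if t = t0 then 1 else 0) *s t) = t0"
  using assms by (simp add: if_distrib[of "\<lambda>c. c *s _"] cong: if_cong)

lemma mem_nonneg_combs_one:
  assumes "finite V" "t \<in> V"
  shows "t \<in> nonneg_combs V 1"
proof (rule nonneg_combsI[where c = "\<lambda>v. if v = t then 1 else 0"])
  show "t = (\<Sum>v\<in>V. (if v = t then 1 else 0) *s v)"
    using sum_delta_scale[OF assms] by simp
qed (use assms in auto)

lemma nonneg_combs_trans: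
  assumes "finite T" "T \<subseteq> nonneg_combs V 1"
  shows "nonneg_combs T a \<subseteq> nonneg_combs V a"
proof
  fix x assume "x \<in> nonneg_combs T a"
  then obtain c where c: "\<forall>t\<in>T. 0 \<le> c t" "sum c T = a" "x = (\<Sum>t\<in>T. c t *s t)"
    by (rule nonneg_combsE)
  have "(\<Sum>t\<in>T. c t *s t) \<in> nonneg_combs V (\<Sum>t\<in>T. c t * 1)"
    using assms c(1) by (intro nonneg_combs_sum ballI nonneg_combs_scale) auto
  then show "x \<in> nonneg_combs V a"
    using c by simp
qed

definition positive_comb :: "('a::linordered_field ^ 'n) set \<Rightarrow> 'a \<Rightarrow> 'a ^ 'n \<Rightarrow> bool" where
  "positive_comb T a x \<longleftrightarrow>
     (\<exists>l. (\<forall>t\<in>T. 0 < l t) \<and> sum l T = a \<and> x = (\<Sum>t\<in>T. l t *s t))"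

lemma positive_comb_support:
  assumes "finite T" "\<forall>t\<in>T. 0 \<le> c t"
  shows "positive_comb {t\<in>T. 0 < c t} (sum c T) (\<Sum>t\<in>T. c t *s t)"
proof -
  have "sum c {t\<in>T. 0 < c t} = sum c T"
    "(\<Sum>t\<in>{t\<in>T. 0 < c t}. c t *s t) = (\<Sum>t\<in>T. c t *s t)"
    by (rule sum.mono_neutral_left; use assms in \<open>auto simp: order_le_less\<close>)+
  then show ?thesis
    unfolding positive_comb_def by (intro exI[of _ c]) auto
qed

lemma nonneg_combs_imp_positive_comb:
  assumes "finite V" "x \<in> nonneg_combs V a"
  obtains T where "T \<subseteq> V" "positive_comb T a x"
proof -
  obtain c where "\<forall>v\<in>V. 0 \<le> c v" "sum c V = a" "x = (\<Sum>v\<in>V. c v *s v)"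
    using assms(2) by (rule nonneg_combsE)
  then show thesis
    using that[of "{v\<in>V. 0 < c v}"] positive_comb_support[OF assms(1)] by auto
qed

lemma nonneg_combs_diff_vertex:
  assumes "finite T" "t \<in> T" "\<forall>s\<in>T. 0 \<le> l s" "1 \<le> l t"
  shows "(\<Sum>s\<in>T. l s *s s) - t \<in> nonneg_combs T (sum l T - 1)"
proof (rule nonneg_combsI[where c = "\<lambda>s. l s - (if s = t then 1 else 0)"])
  show "(\<Sum>s\<in>T. l s *s s) - t = (\<Sum>s\<in>T. (l s - (if s = t then 1 else 0)) *s s)"
    by (simp add: vector_sub_rdistrib sum_subtractf sum_delta_scale[OF assms(1,2)])
qed (use assms in \<open>auto simp: sum_subtractf\<close>)

lemma ex_min_ratio:
  fixes l \<alpha> :: "'a \<Rightarrow> 'b::linordered_field"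
  assumes "finite T" "\<forall>t\<in>T. 0 < l t" "t1 \<in> T" "0 < \<alpha> t1"
  obtains \<tau> t0 where "0 < \<tau>" "t0 \<in> T" "0 < \<alpha> t0" "l t0 = \<tau> * \<alpha> t0" "\<forall>t\<in>T. \<tau> * \<alpha> t \<le> l t"
proof -
  let ?A = "{t\<in>T. 0 < \<alpha> t}"
  obtain t0 where t0: "is_arg_min (\<lambda>t. l t / \<alpha> t) (\<lambda>t. t \<in> ?A) t0"
    using ex_is_arg_min_if_finite[of ?A] assms by auto
  then have t0A: "t0 \<in> T" "0 < \<alpha> t0"
    and le: "\<And>t. t \<in> T \<Longrightarrow> 0 < \<alpha> t \<Longrightarrow> l t0 / \<alpha> t0 \<le> l t / \<alpha> t"
    by (auto simp: is_arg_min_def not_less)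
  show thesis
  proof (rule that[of "l t0 / \<alpha> t0" t0])
    show "\<forall>t\<in>T. l t0 / \<alpha> t0 * \<alpha> t \<le> l t"
    proof
      fix t assume "t \<in> T"
      show "l t0 / \<alpha> t0 * \<alpha> t \<le> l t"
      proof (cases "0 < \<alpha> t")
        case True
        then show ?thesis using le[OF \<open>t \<in> T\<close> True] by (simp add: pos_le_divide_eq)
      next
        case False
        then have "l t0 / \<alpha> t0 * \<alpha> t \<le> 0"
          by (intro mult_nonneg_nonpos) (use assms(2) t0A in auto)
        then show ?thesis using assms(2) \<open>t \<in> T\<close> by (meson less_imp_le order_trans)
      qed
    qed
  qed (use assms(2) t0A in auto)
qed

section \<open>Affine independence and the pulling step\<close>

definition affinely_independent :: "('a::field ^ 'n) set \<Rightarrow> bool" where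
  "affinely_independent T \<longleftrightarrow>
     (\<forall>\<alpha>. sum \<alpha> T = 0 \<and> (\<Sum>t\<in>T. \<alpha> t *s t) = 0 \<longrightarrow> (\<forall>t\<in>T. \<alpha> t = 0))"

lemma affinely_independent_coeffs_eq:
  assumes "affinely_independent T" "sum a T = sum b T"
    "(\<Sum>t\<in>T. a t *s t) = (\<Sum>t\<in>T. b t *s t)" "t \<in> T"
  shows "a t = b t"
proof -
  have "sum (\<lambda>t. a t - b t) T = 0" "(\<Sum>t\<in>T. (a t - b t) *s t) = 0"
    using assms(2,3) by (simp_all add: sum_subtractf vector_sub_rdistrib)
  then show ?thesis
    using assms(1,4) unfolding affinely_independent_def by fastforce
qed

lemma card_le_if_affinely_independent:
  fixes T :: "('a::field ^ 'n) set"
  assumes "finite T" "affinely_independent T"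
  shows "card T \<le> CARD('n) + 1"
proof -
  define lift :: "'a ^ 'n \<Rightarrow> 'a ^ 'n option"
    where "lift t = (\<chi> i. case i of None \<Rightarrow> 1 | Some j \<Rightarrow> t $ j)" for t
  have "inj lift"
    by (rule injI) (simp add: lift_def vec_eq_iff, metis option.simps(5))
  then have inj: "inj_on lift T"
    by (rule inj_on_subset) simp
  have "vec.independent (lift ` T)"
    unfolding vec.independent_explicit
  proof (intro conjI allI impI ballI)
    fix c and v assume c: "(\<Sum>v\<in>lift ` T. c v *s v) = 0" and "v \<in> lift ` T"
    then obtain t where t: "t \<in> T" "v = lift t" by blast
    have "(\<Sum>s\<in>T. c (lift s) *s lift s) = 0"
      using c by (simp add: sum.reindex[OF inj])
    then have "(\<Sum>s\<in>T. c (lift s) *s lift s) $ i = 0" for i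
      by simp
    from this[of None] this[of "Some j" for j]
    have "sum (c \<circ> lift) T = 0" "(\<Sum>s\<in>T. (c \<circ> lift) s *s s) = 0"
      by (simp_all add: lift_def vec_eq_iff)
    then show "c v = 0"
      using assms(2) t unfolding affinely_independent_def by fastforce
  qed (use assms(1) in simp)
  then have "card (lift ` T) \<le> vec.dim (UNIV :: ('a ^ 'n option) set)"
    by (intro vec.independent_card_le_dim) auto
  then show ?thesis
    by (simp add: card_image[OF inj] card_cart_basis)
qed

lemma sum_scale_diff:
  fixes T :: "('a::field ^ 'n) set"
  shows "(\<Sum>t\<in>T. (l t - r * \<beta> t) *s t) = (\<Sum>t\<in>T. l t *s t) - r *s (\<Sum>t\<in>T. \<beta> t *s t)"
  by (simp add: vector_sub_rdistrib sum_subtractf vec.scale_sum_right vector_smult_assoc)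

lemma positive_comb_shrink:
  fixes T :: "('a::linordered_field ^ 'n) set"
  assumes "finite T" "positive_comb T a x" "\<not> affinely_independent T"
  obtains T' where "T' \<subset> T" "positive_comb T' a x"
proof -
  obtain l where l: "\<forall>t\<in>T. 0 < l t" "sum l T = a" "x = (\<Sum>t\<in>T. l t *s t)"
    using assms(2) unfolding positive_comb_def by blast
  obtain \<alpha> t1 where \<alpha>: "sum \<alpha> T = 0" "(\<Sum>t\<in>T. \<alpha> t *s t) = 0" "t1 \<in> T" "\<alpha> t1 \<noteq> 0"
    using assms(3) unfolding affinely_independent_def by blast
  define \<beta> where "\<beta> t = inverse (\<alpha> t1) * \<alpha> t" for t
  have "sum \<beta> T = inverse (\<alpha> t1) * sum \<alpha> T"
    "(\<Sum>t\<in>T. \<beta> t *s t) = inverse (\<alpha> t1) *s (\<Sum>t\<in>T. \<alpha> t *s t)"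
    by (simp_all add: \<beta>_def sum_distrib_left vec.scale_sum_right vector_smult_assoc)
  with \<alpha>(1,2) have \<beta>: "sum \<beta> T = 0" "(\<Sum>t\<in>T. \<beta> t *s t) = 0"
    by simp_all
  have "0 < \<beta> t1"
    using \<alpha>(4) by (simp add: \<beta>_def)
  obtain \<tau> t0 where \<tau>: "t0 \<in> T" "l t0 = \<tau> * \<beta> t0" "\<forall>t\<in>T. \<tau> * \<beta> t \<le> l t"
    using ex_min_ratio[of T l t1 \<beta>] assms(1) l(1) \<alpha>(3) \<open>0 < \<beta> t1\<close> by metis
  define l' where "l' t = l t - \<tau> * \<beta> t" for t
  have "sum l' T = a" "(\<Sum>t\<in>T. l' t *s t) = x"
    using l \<beta> by (simp_all add: l'_def sum_subtractf sum_distrib_left[symmetric] sum_scale_diff)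
  moreover have "positive_comb {t\<in>T. 0 < l' t} (sum l' T) (\<Sum>t\<in>T. l' t *s t)"
    using \<tau>(3) by (intro positive_comb_support assms(1)) (simp add: l'_def)
  moreover have "t0 \<notin> {t\<in>T. 0 < l' t}"
    using \<tau>(2) by (simp add: l'_def)
  then have "{t\<in>T. 0 < l' t} \<subset> T"
    using \<tau>(1) by blast
  ultimately show thesis
    using that by simp
qed

lemma affinely_independent_comb_notin:
  fixes T :: "('a::linordered_field ^ 'n) set"
  assumes T: "finite T" "affinely_independent T" and \<mu>: "\<forall>t\<in>T. \<mu> t < 1" "sum \<mu> T = 1"
  shows "(\<Sum>t\<in>T. \<mu> t *s t) \<notin> T"
proof
  let ?w = "\<Sum>t\<in>T. \<mu> t *s t"
  assume "?w \<in> T"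
  then have "sum (\<lambda>t. if t = ?w then 1 else 0) T = 1"
    "(\<Sum>t\<in>T. (if t = ?w then 1 else 0) *s t) = ?w"
    using T(1) by (simp_all add: sum_delta_scale)
  then have "\<mu> ?w = 1"
    using affinely_independent_coeffs_eq[OF T(2), of \<mu> "\<lambda>t. if t = ?w then 1 else 0" ?w]
      \<mu>(2) \<open>?w \<in> T\<close> by simp
  then show False
    using \<mu>(1) \<open>?w \<in> T\<close> by auto
qed

lemma vertex_notin_nonneg_combs_insert:
  fixes T :: "('a::linordered_field ^ 'n) set"
  assumes T: "finite T" "affinely_independent T"
    and \<mu>: "\<forall>t\<in>T. 0 \<le> \<mu> t \<and> \<mu> t < 1" "sum \<mu> T = 1" and w: "w = (\<Sum>t\<in>T. \<mu> t *s t)"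
    and tj: "tj \<in> T" and S: "S \<subseteq> T - {tj}"
  shows "tj \<notin> nonneg_combs (insert w S) 1"
proof
  have "finite S"
    using T(1) S by (meson Diff_subset finite_subset subset_trans)
  have "w \<notin> S"
    using \<mu> S affinely_independent_comb_notin[OF T, of \<mu>] unfolding w by auto
  assume "tj \<in> nonneg_combs (insert w S) 1"
  then obtain \<beta> where \<beta>: "\<forall>v\<in>insert w S. 0 \<le> \<beta> v" "sum \<beta> (insert w S) = 1"
    "tj = (\<Sum>v\<in>insert w S. \<beta> v *s v)"
    by (rule nonneg_combsE)
  then have \<beta>': "\<beta> w + sum \<beta> S = 1" "tj = \<beta> w *s w + (\<Sum>v\<in>S. \<beta> v *s v)"
    by (simp_all add: sum.insert[OF \<open>finite S\<close> \<open>w \<notin> S\<close>])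
  define \<gamma> where "\<gamma> t = \<beta> w * \<mu> t + (if t \<in> S then \<beta> t else 0)" for t
  have restrict: "(\<Sum>t\<in>T. if t \<in> S then \<beta> t else 0) = sum \<beta> S"
    "(\<Sum>t\<in>T. (if t \<in> S then \<beta> t else 0) *s t) = (\<Sum>t\<in>S. \<beta> t *s t)"
    by (rule sum.mono_neutral_cong_right; use T(1) S in auto)+
  have "sum \<gamma> T = sum (\<lambda>t. if t = tj then 1 else 0) T"
    using \<beta>'(1) \<mu>(2) tj T(1) by (simp add: \<gamma>_def sum.distrib sum_distrib_left[symmetric] restrict(1))
  moreover have "(\<Sum>t\<in>T. \<gamma> t *s t) =
      \<beta> w *s (\<Sum>t\<in>T. \<mu> t *s t) + (\<Sum>t\<in>T. (if t \<in> S then \<beta> t else 0) *s t)"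
    by (simp add: \<gamma>_def vector_sadd_rdistrib sum.distrib vec.scale_sum_right vector_smult_assoc)
  then have "(\<Sum>t\<in>T. \<gamma> t *s t) = (\<Sum>t\<in>T. (if t = tj then 1 else 0) *s t)"
    using \<beta>'(2)[symmetric] w[symmetric] by (simp add: restrict(2) sum_delta_scale[OF T(1) tj])
  ultimately have "\<gamma> tj = 1"
    using affinely_independent_coeffs_eq[OF T(2), of \<gamma> _ tj] tj by simp
  moreover have "tj \<notin> S"
    using S by blast
  ultimately have "\<beta> w * \<mu> tj = 1"
    by (simp add: \<gamma>_def)
  moreover have "\<beta> w * \<mu> tj \<le> \<mu> tj"
    using \<beta>(1) \<beta>'(1) sum_nonneg[of S \<beta>] \<mu>(1) tj by (intro mult_left_le_one_le) auto
  ultimately show False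
    using \<mu>(1) tj by fastforce
qed

text \<open>Pulling the simplex \<open>T\<close> towards the point \<open>w\<close> of its relative interior: the
  vertex \<open>tj\<close> minimising \<open>l t / \<mu> t\<close> is replaced by \<open>w\<close>.\<close>

lemma positive_comb_exchange:
  fixes T :: "('a::linordered_field ^ 'n) set"
  assumes T: "finite T" "affinely_independent T"
    and l: "\<forall>t\<in>T. 0 < l t" "x = (\<Sum>t\<in>T. l t *s t)"
    and \<mu>: "\<forall>t\<in>T. 0 < \<mu> t \<and> \<mu> t < 1" "sum \<mu> T = 1"
    and w: "w = (\<Sum>t\<in>T. \<mu> t *s t)"
  obtains tj S where "tj \<in> T" "S \<subseteq> T - {tj}" "positive_comb (insert w S) (sum l T) x"
    "tj \<notin> nonneg_combs (insert w S) 1"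
proof -
  obtain t1 where "t1 \<in> T"
    using \<mu>(2) by fastforce
  obtain \<tau> tj where \<tau>: "0 < \<tau>" "tj \<in> T" "0 < \<mu> tj" "l tj = \<tau> * \<mu> tj" "\<forall>t\<in>T. \<tau> * \<mu> t \<le> l t"
    by (rule ex_min_ratio[of T l t1 \<mu>]) (use T(1) l(1) \<mu>(1) \<open>t1 \<in> T\<close> in auto)
  define l' where "l' t = l t - \<tau> * \<mu> t" for t
  define S where "S = {t\<in>T. 0 < l' t}"
  have S: "S \<subseteq> T - {tj}" "finite S" "w \<notin> S"
    using \<tau>(4) T(1) affinely_independent_comb_notin[OF T, of \<mu>] \<mu>(1,2)
    by (auto simp: S_def l'_def w)
  have "positive_comb S (sum l' T) (\<Sum>t\<in>T. l' t *s t)"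
    unfolding S_def using \<tau>(5) by (intro positive_comb_support T(1)) (simp add: l'_def)
  then obtain \<nu> where \<nu>: "\<forall>t\<in>S. 0 < \<nu> t" "sum \<nu> S = sum l' T"
    "(\<Sum>t\<in>S. \<nu> t *s t) = (\<Sum>t\<in>T. l' t *s t)"
    unfolding positive_comb_def by auto
  have decomp: "sum l' T + \<tau> = sum l T" "(\<Sum>t\<in>T. l' t *s t) + \<tau> *s w = x"
    using l \<mu> w by (simp_all add: l'_def sum_subtractf sum_distrib_left[symmetric] sum_scale_diff)
  have "positive_comb (insert w S) (sum l T) x"
    unfolding positive_comb_def
  proof (intro exI[of _ "\<nu>(w := \<tau>)"] conjI)
    have "sum (\<nu>(w := \<tau>)) S = sum \<nu> S" "(\<Sum>t\<in>S. (\<nu>(w := \<tau>)) t *s t) = (\<Sum>t\<in>S. \<nu> t *s t)"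
      using S(3) by (auto intro!: sum.cong)
    then show "sum (\<nu>(w := \<tau>)) (insert w S) = sum l T"
      "x = (\<Sum>t\<in>insert w S. (\<nu>(w := \<tau>)) t *s t)"
      using \<nu>(2,3) decomp by (simp_all add: sum.insert[OF S(2,3)] add.commute)
  qed (use \<nu>(1) \<tau>(1) in auto)
  moreover have "tj \<notin> nonneg_combs (insert w S) 1"
    using \<mu> by (intro vertex_notin_nonneg_combs_insert[OF T _ _ w \<tau>(2) S(1)]) auto
  ultimately show thesis
    using that \<tau>(2) S(1) by blast
qed

section \<open>Normality of dilated lattice polytopes\<close>

lemma zero_in_lattice_pts: "0 \<in> lattice_pts"
  by (simp add: lattice_pts_def)

lemma lattice_pts_add: "x \<in> lattice_pts \<Longrightarrow> y \<in> lattice_pts \<Longrightarrow> x + y \<in> lattice_pts"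
  by (simp add: lattice_pts_def)

lemma lattice_pts_diff: "x \<in> lattice_pts \<Longrightarrow> y \<in> lattice_pts \<Longrightarrow> x - y \<in> lattice_pts"
  by (simp add: lattice_pts_def)

lemma lattice_pts_sum: "(\<And>i. i \<in> I \<Longrightarrow> f i \<in> lattice_pts) \<Longrightarrow> sum f I \<in> lattice_pts"
  by (induction I rule: infinite_finite_induct) (auto intro: zero_in_lattice_pts lattice_pts_add)

lemma finite_lattice_pts_nonneg_combs:
  fixes V :: "(rat ^ 'n) set"
  assumes "finite V"
  shows "finite (nonneg_combs V 1 \<inter> lattice_pts)"
proof -
  define B where "B = (\<Sum>v\<in>V. \<Sum>i\<in>UNIV. \<bar>v $ i\<bar>)"
  define Z where "Z = {x :: rat ^ 'n. \<forall>i. x $ i \<in> of_int ` {-\<lceil>B\<rceil>..\<lceil>B\<rceil>}}"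
  have "Z \<subseteq> vec_lambda ` (UNIV \<rightarrow>\<^sub>E of_int ` {-\<lceil>B\<rceil>..\<lceil>B\<rceil>})"
    unfolding Z_def by (auto intro!: image_eqI[where x = "vec_nth _"])
  then have "finite Z"
    by (rule finite_subset) (intro finite_imageI finite_PiE; simp)
  moreover have "x \<in> Z" if x: "x \<in> nonneg_combs V 1" "x \<in> lattice_pts" for x
    unfolding Z_def
  proof (intro CollectI allI)
    fix i
    from x(1) obtain c where c: "\<forall>v\<in>V. 0 \<le> c v" "sum c V = 1" "x = (\<Sum>v\<in>V. c v *s v)"
      by (rule nonneg_combsE)
    have "\<bar>x $ i\<bar> \<le> (\<Sum>v\<in>V. \<bar>c v * v $ i\<bar>)"
      using c(3) by (simp add: sum_abs)
    also have "\<dots> \<le> (\<Sum>v\<in>V. \<bar>v $ i\<bar>)"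
    proof (rule sum_mono)
      fix v assume "v \<in> V"
      then have "c v \<le> 1"
        using c(1,2) assms member_le_sum[of v V c] by auto
      then show "\<bar>c v * v $ i\<bar> \<le> \<bar>v $ i\<bar>"
        using c(1) \<open>v \<in> V\<close> by (simp add: abs_mult mult_left_le_one_le)
    qed
    also have "\<dots> \<le> B"
      unfolding B_def by (intro sum_mono member_le_sum) auto
    finally have "\<bar>x $ i\<bar> \<le> B" .
    moreover obtain z where z: "x $ i = of_int z"
      using x(2) by (auto simp: lattice_pts_def elim: Ints_cases)
    ultimately have "z \<in> {-\<lceil>B\<rceil>..\<lceil>B\<rceil>}"
      by (simp add: abs_le_iff) linarith
    then show "x $ i \<in> of_int ` {-\<lceil>B\<rceil>..\<lceil>B\<rceil>}"
      using z by blast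
  qed
  ultimately show ?thesis
    by (meson IntE finite_subset subsetI)
qed

lemma lattice_simplex_pull:
  fixes T :: "(rat ^ 'n) set"
  assumes T: "finite T" "T \<subseteq> lattice_pts" "affinely_independent T" and "x \<in> lattice_pts"
    and l: "\<forall>t\<in>T. 0 < l t \<and> l t < 1" "x = (\<Sum>t\<in>T. l t *s t)" "sum l T = of_nat k"
    and k: "CARD('n) \<le> k"
  obtains T' where "finite T'" "T' \<subseteq> nonneg_combs T 1 \<inter> lattice_pts" "card T' \<le> card T"
    "positive_comb T' (of_nat k) x"
    "nonneg_combs T' 1 \<inter> lattice_pts \<subset> nonneg_combs T 1 \<inter> lattice_pts"
proof -
  have "T \<noteq> {}"
    using l(3) k by auto
  then have "sum l T < sum (\<lambda>_. 1) T"
    using T(1) l(1) by (intro sum_strict_mono) auto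
  then have "k < card T"
    using l(3) by simp
  then have card_T: "card T = Suc k"
    using card_le_if_affinely_independent[OF T(1,3)] k by linarith
  define \<mu> where "\<mu> t = 1 - l t" for t
  define w where "w = (\<Sum>t\<in>T. \<mu> t *s t)"
  have \<mu>: "\<forall>t\<in>T. 0 < \<mu> t \<and> \<mu> t < 1" "sum \<mu> T = 1"
    using l(1,3) card_T by (auto simp: \<mu>_def sum_subtractf)
  have "w = (\<Sum>t\<in>T. t) - x"
    using l(2) by (simp add: w_def \<mu>_def vector_sub_rdistrib sum_subtractf)
  then have w_lattice: "w \<in> lattice_pts"
    using T(2) \<open>x \<in> lattice_pts\<close> by (auto intro!: lattice_pts_diff lattice_pts_sum)
  have w_hull: "w \<in> nonneg_combs T 1"
    unfolding w_def using \<mu> by (intro nonneg_combsI) auto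
  obtain tj S where tj: "tj \<in> T" and S: "S \<subseteq> T - {tj}"
    and pos: "positive_comb (insert w S) (sum l T) x" and tj_out: "tj \<notin> nonneg_combs (insert w S) 1"
    by (rule positive_comb_exchange[OF T(1,3) _ l(2) \<mu> w_def]) (use l(1) in auto)
  have "finite S"
    using T(1) S finite_subset by blast
  then have fin: "finite (insert w S)"
    by simp
  have sub: "insert w S \<subseteq> nonneg_combs T 1 \<inter> lattice_pts"
    using S T w_lattice w_hull mem_nonneg_combs_one by blast
  have "card (insert w S) \<le> Suc (card S)"
    using \<open>finite S\<close> by (simp add: card_insert_if)
  also have "\<dots> \<le> Suc (card (T - {tj}))"
    using T(1) S by (simp add: card_mono)
  also have "\<dots> = card T"
    using T(1) tj card_T by simp
  finally have card_le: "card (insert w S) \<le> card T" .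
  have "nonneg_combs (insert w S) 1 \<subseteq> nonneg_combs T 1"
    using fin sub by (intro nonneg_combs_trans) auto
  moreover have "tj \<in> nonneg_combs T 1 \<inter> lattice_pts"
    using mem_nonneg_combs_one[OF T(1) tj] tj T(2) by blast
  ultimately have "nonneg_combs (insert w S) 1 \<inter> lattice_pts \<subset> nonneg_combs T 1 \<inter> lattice_pts"
    using tj_out by blast
  then show thesis
    using pos l(3) by (intro that[OF fin sub card_le]) simp_all
qed

lemma lattice_point_peel:
  fixes V :: "(rat ^ 'n) set"
  assumes V: "finite V" "V \<subseteq> lattice_pts"
    and x: "x \<in> lattice_pts" "x \<in> nonneg_combs V (of_nat (Suc m))"
    and m: "CARD('n) \<le> Suc m"
  obtains p where "p \<in> nonneg_combs V 1 \<inter> lattice_pts" "x - p \<in> nonneg_combs V (of_nat m)"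
proof -
  define L where "L = nonneg_combs V 1 \<inter> lattice_pts"
  have "finite L"
    unfolding L_def using finite_lattice_pts_nonneg_combs[OF V(1)] .
  have hull_L: "nonneg_combs T a \<subseteq> nonneg_combs V a" if "T \<subseteq> L" for T a
    using that finite_subset[OF that \<open>finite L\<close>] by (intro nonneg_combs_trans) (auto simp: L_def)
  define R where "R T \<longleftrightarrow> T \<subseteq> L \<and> positive_comb T (of_nat (Suc m)) x" for T
  \<comment> \<open>Both reductions below strictly decrease \<open>f\<close>, contradicting the minimality of \<open>T\<close>.\<close>
  define f where "f T = card (nonneg_combs T 1 \<inter> lattice_pts) + card T" for T :: "(rat ^ 'n) set"
  obtain T0 where "T0 \<subseteq> V" "positive_comb T0 (of_nat (Suc m)) x"
    using nonneg_combs_imp_positive_comb[OF V(1) x(2)] .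
  moreover have "V \<subseteq> L"
    unfolding L_def using V mem_nonneg_combs_one by blast
  ultimately have "R T0"
    unfolding R_def by blast
  then obtain T where "R T" and T_min: "\<And>T'. R T' \<Longrightarrow> f T \<le> f T'"
    using ex_has_least_nat[of R _ f] by metis
  then have T: "T \<subseteq> L" "positive_comb T (of_nat (Suc m)) x"
    by (auto simp: R_def)
  then have "finite T" "T \<subseteq> lattice_pts"
    using finite_subset[OF T(1) \<open>finite L\<close>] by (auto simp: L_def)
  have "finite (nonneg_combs T 1 \<inter> lattice_pts)"
    using finite_lattice_pts_nonneg_combs[OF \<open>finite T\<close>] .
  have indep: "affinely_independent T"
  proof (rule ccontr)
    assume "\<not> affinely_independent T"
    then obtain T' where "T' \<subset> T" "positive_comb T' (of_nat (Suc m)) x"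
      using positive_comb_shrink[OF \<open>finite T\<close> T(2)] by blast
    moreover have "nonneg_combs T' 1 \<subseteq> nonneg_combs T 1"
      using \<open>T' \<subset> T\<close> \<open>finite T\<close> by (intro nonneg_combs_mono) auto
    ultimately have "R T'" "f T' < f T"
      using T(1) \<open>finite T\<close> \<open>finite (nonneg_combs T 1 \<inter> lattice_pts)\<close>
      by (auto simp: R_def f_def intro!: add_le_less_mono card_mono psubset_card_mono)
    then show False
      using T_min[of T'] by simp
  qed
  obtain l where l: "\<forall>t\<in>T. 0 < l t" "sum l T = of_nat (Suc m)" "x = (\<Sum>t\<in>T. l t *s t)"
    using T(2) unfolding positive_comb_def by blast
  show thesis
  proof (cases "\<exists>t\<in>T. 1 \<le> l t")
    case True
    then obtain t where t: "t \<in> T" "1 \<le> l t"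
      by blast
    have "x - t \<in> nonneg_combs T (of_nat m)"
      using nonneg_combs_diff_vertex[of T t l] \<open>finite T\<close> t l by (simp add: less_imp_le)
    then show thesis
      using that t(1) T(1) hull_L unfolding L_def by blast
  next
    case False
    obtain T' where "finite T'" "T' \<subseteq> nonneg_combs T 1 \<inter> lattice_pts" "card T' \<le> card T"
      "positive_comb T' (of_nat (Suc m)) x"
      "nonneg_combs T' 1 \<inter> lattice_pts \<subset> nonneg_combs T 1 \<inter> lattice_pts"
      by (rule lattice_simplex_pull[OF \<open>finite T\<close> \<open>T \<subseteq> lattice_pts\<close> indep x(1) _ l(3,2) m])
        (use l(1) False in \<open>auto simp: not_le\<close>)
    moreover have "nonneg_combs T 1 \<inter> lattice_pts \<subseteq> L"
      using hull_L[OF T(1)] by (auto simp: L_def)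
    ultimately have "R T'" "f T' < f T"
      using \<open>finite (nonneg_combs T 1 \<inter> lattice_pts)\<close>
      by (auto simp: R_def f_def intro!: add_less_le_mono psubset_card_mono)
    then show thesis
      using T_min[of T'] by simp
  qed
qed

lemma lattice_point_peel_many:
  fixes V :: "(rat ^ 'n) set"
  assumes V: "finite V" "V \<subseteq> lattice_pts" and a: "CARD('n) \<le> Suc a"
    and x: "x \<in> lattice_pts" "x \<in> nonneg_combs V (of_nat (a + j))"
  shows "\<exists>q \<in> nonneg_combs V (of_nat j) \<inter> lattice_pts. x - q \<in> nonneg_combs V (of_nat a)"
  using x
proof (induction j arbitrary: x)
  case 0
  then show ?case
    by (intro bexI[of _ 0]) (auto intro: zero_in_nonneg_combs zero_in_lattice_pts)
next
  case (Suc j)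
  obtain p where p: "p \<in> nonneg_combs V 1 \<inter> lattice_pts" "x - p \<in> nonneg_combs V (of_nat (a + j))"
    by (rule lattice_point_peel[OF V Suc.prems(1), of "a + j"]) (use Suc.prems(2) a in auto)
  then obtain q where q: "q \<in> nonneg_combs V (of_nat j) \<inter> lattice_pts"
    "x - p - q \<in> nonneg_combs V (of_nat a)"
    using Suc.IH[of "x - p"] Suc.prems(1) lattice_pts_diff by blast
  have "p + q \<in> nonneg_combs V (1 + of_nat j) \<inter> lattice_pts"
    using p(1) q(1) by (auto intro: nonneg_combs_add lattice_pts_add)
  then show ?case
    using q(2) by (metis diff_diff_eq of_nat_Suc)
qed

lemma nonneg_combs_lattice_normal:
  fixes V :: "(rat ^ 'n) set"
  assumes V: "finite V" "V \<subseteq> lattice_pts" and c: "1 \<le> c" "CARD('n) \<le> c + 1"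
    and "0 < k" and x: "x \<in> lattice_pts" "x \<in> nonneg_combs V (of_nat (k * c))"
  shows "\<exists>z. (\<forall>i<k. z i \<in> nonneg_combs V (of_nat c) \<inter> lattice_pts) \<and> x = (\<Sum>i<k. z i)"
  using \<open>0 < k\<close> x
proof (induction k arbitrary: x rule: nat_induct_non_zero)
  case 1
  then show ?case
    by (intro exI[of _ "\<lambda>_. x"]) auto
next
  case (Suc k)
  have "c \<le> k * c"
    using \<open>0 < k\<close> by simp
  then have "CARD('n) \<le> Suc (k * c)"
    using c(2) by linarith
  moreover have "x \<in> nonneg_combs V (of_nat (k * c + c))"
    using Suc.prems(2) by (simp add: add.commute)
  ultimately obtain q where q: "q \<in> nonneg_combs V (of_nat c) \<inter> lattice_pts"
    "x - q \<in> nonneg_combs V (of_nat (k * c))"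
    using lattice_point_peel_many[OF V _ Suc.prems(1), of "k * c" c] by blast
  then obtain z where z: "\<forall>i<k. z i \<in> nonneg_combs V (of_nat c) \<inter> lattice_pts" "x - q = (\<Sum>i<k. z i)"
    using Suc.IH[of "x - q"] Suc.prems(1) lattice_pts_diff by blast
  have "(\<Sum>i<k. (z(k := q)) i) = (\<Sum>i<k. z i)"
    by (rule sum.cong) auto
  then have "x = (\<Sum>i<Suc k. (z(k := q)) i)"
    using z(2) by (simp add: algebra_simps)
  moreover have "\<forall>i<Suc k. (z(k := q)) i \<in> nonneg_combs V (of_nat c) \<inter> lattice_pts"
    using z(1) q(1) by (auto simp: less_Suc_eq)
  ultimately show ?case
    by blast
qed

section \<open>Polyhedra with recession cone \<open>\<sigma>\<^sup>\<or>\<close>\<close>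

lemma qpair_add: "qpair (s + t) u = qpair s u + qpair t u"
  unfolding qpair_def by (simp add: distrib_right sum.distrib)

lemma qpair_scale: "qpair (r *s s) u = r * qpair s u"
  unfolding qpair_def by (simp add: sum_distrib_left mult.assoc)

lemma zero_in_dual_cone: "0 \<in> dual_cone \<sigma>"
  by (simp add: dual_cone_def qpair_def)

lemma dual_cone_add: "s \<in> dual_cone \<sigma> \<Longrightarrow> t \<in> dual_cone \<sigma> \<Longrightarrow> s + t \<in> dual_cone \<sigma>"
  unfolding dual_cone_def by (simp add: qpair_add)

lemma dual_cone_scale: "s \<in> dual_cone \<sigma> \<Longrightarrow> 0 \<le> r \<Longrightarrow> r *s s \<in> dual_cone \<sigma>"
  unfolding dual_cone_def by (simp add: qpair_scale)

lemma dual_cone_sum: "(\<And>i. i \<in> I \<Longrightarrow> f i \<in> dual_cone \<sigma>) \<Longrightarrow> sum f I \<in> dual_cone \<sigma>"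
  by (induction I rule: infinite_finite_induct) (auto intro: zero_in_dual_cone dual_cone_add)

lemma ex_nat_scale_in_lattice_pts:
  fixes s :: "rat ^ 'n"
  obtains d :: nat where "0 < d" "of_nat d *s s \<in> lattice_pts"
proof -
  define D where "D = (\<Prod>i\<in>UNIV. snd (quotient_of (s $ i)))"
  have "0 < D"
    unfolding D_def by (intro prod_pos) (simp add: quotient_of_denom_pos')
  have "of_int D * s $ i \<in> \<int>" for i
  proof -
    obtain a b where ab: "quotient_of (s $ i) = (a, b)"
      by (cases "quotient_of (s $ i)")
    have "snd (quotient_of (s $ i)) dvd D"
      unfolding D_def by (rule dvd_prodI) auto
    then obtain r where "D = b * r"
      using ab by auto
    then have "of_int D * s $ i = of_int (r * a)"
      using quotient_of_div[OF ab] quotient_of_denom_pos[OF ab] by simp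
    then show ?thesis
      by simp
  qed
  moreover have "(of_nat (nat D) :: rat) = of_int D"
    using \<open>0 < D\<close> by simp
  ultimately show thesis
    using \<open>0 < D\<close> by (intro that[of "nat D"]) (auto simp: lattice_pts_def)
qed

lemma nonneg_combs_translate_subset:
  fixes V :: "(rat ^ 'n) set"
  assumes "finite V" "w \<in> dual_cone \<sigma>"
  shows "nonneg_combs (V \<union> (\<lambda>v. v + w) ` V) a \<subseteq>
    {q + s | q s. q \<in> nonneg_combs V a \<and> s \<in> dual_cone \<sigma>}"
proof
  let ?W = "V \<union> (\<lambda>v. v + w) ` V"
  fix y assume "y \<in> nonneg_combs ?W a"
  then obtain \<beta> where \<beta>: "\<forall>v\<in>?W. 0 \<le> \<beta> v" "sum \<beta> ?W = a" "y = (\<Sum>v\<in>?W. \<beta> v *s v)"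
    by (rule nonneg_combsE)
  define base where "base t = (if t \<in> V then t else t - w)" for t
  define shift where "shift t = (if t \<in> V then 0 else w)" for t
  have "base t + shift t = t" for t
    by (simp add: base_def shift_def)
  then have "y = (\<Sum>t\<in>?W. \<beta> t *s (base t + shift t))"
    unfolding \<beta>(3) by simp
  also have "\<dots> = (\<Sum>t\<in>?W. \<beta> t *s base t) + (\<Sum>t\<in>?W. \<beta> t *s shift t)"
    by (simp add: vector_add_ldistrib sum.distrib)
  finally have "y = (\<Sum>t\<in>?W. \<beta> t *s base t) + (\<Sum>t\<in>?W. \<beta> t *s shift t)" .
  moreover have "(\<Sum>t\<in>?W. \<beta> t *s base t) \<in> nonneg_combs V (\<Sum>t\<in>?W. \<beta> t * 1)"
    using assms(1) \<beta>(1)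
    by (intro nonneg_combs_sum ballI nonneg_combs_scale mem_nonneg_combs_one) (auto simp: base_def)
  moreover have "(\<Sum>t\<in>?W. \<beta> t *s shift t) \<in> dual_cone \<sigma>"
    using assms(2) \<beta>(1) by (intro dual_cone_sum dual_cone_scale) (auto simp: shift_def zero_in_dual_cone)
  ultimately show "y \<in> {q + s | q s. q \<in> nonneg_combs V a \<and> s \<in> dual_cone \<sigma>}"
    using \<beta>(2) by auto
qed

lemma Pol_point_in_lattice_polytope:
  fixes V :: "(rat ^ 'n) set"
  assumes V: "finite V" "V \<subseteq> lattice_pts"
    and p: "p \<in> {q + s | q s. q \<in> nonneg_combs V 1 \<and> s \<in> dual_cone \<sigma>}"
  obtains W where "finite W" "W \<subseteq> lattice_pts" "p \<in> nonneg_combs W 1"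
    "nonneg_combs W 1 \<subseteq> {q + s | q s. q \<in> nonneg_combs V 1 \<and> s \<in> dual_cone \<sigma>}"
proof -
  obtain q s where qs: "p = q + s" "q \<in> nonneg_combs V 1" "s \<in> dual_cone \<sigma>"
    using p by blast
  obtain d :: nat where d: "0 < d" "of_nat d *s s \<in> lattice_pts"
    by (rule ex_nat_scale_in_lattice_pts)
  define w where "w = of_nat d *s s"
  define W where "W = V \<union> (\<lambda>v. v + w) ` V"
  have W: "finite W" "W \<subseteq> lattice_pts"
    using V d(2) by (auto simp: W_def w_def intro: lattice_pts_add)
  obtain c where c: "\<forall>v\<in>V. 0 \<le> c v" "sum c V = 1" "q = (\<Sum>v\<in>V. c v *s v)"
    using qs(2) by (rule nonneg_combsE)
  have "(\<Sum>v\<in>V. c v *s (v + w)) \<in> nonneg_combs W (\<Sum>v\<in>V. c v * 1)"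
    using V(1) W(1) c(1)
    by (intro nonneg_combs_sum ballI nonneg_combs_scale mem_nonneg_combs_one) (auto simp: W_def)
  moreover have "(\<Sum>v\<in>V. c v *s (v + w)) = q + w"
    using c(2,3) by (simp add: vector_add_ldistrib sum.distrib vec.scale_sum_left[symmetric])
  ultimately have "q + w \<in> nonneg_combs W 1"
    using c(2) by simp
  moreover have "q \<in> nonneg_combs W 1"
    using qs(2) nonneg_combs_mono[OF W(1)] by (auto simp: W_def)
  moreover have "0 \<le> 1 - 1 / (of_nat d :: rat)"
    using d(1) by simp
  ultimately have "(1 - 1 / of_nat d) *s q + (1 / of_nat d) *s (q + w) \<in>
      nonneg_combs W ((1 - 1 / of_nat d) * 1 + (1 / of_nat d) * 1)"
    by (intro nonneg_combs_add nonneg_combs_scale) auto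
  then have "(1 - 1 / of_nat d) *s q + (1 / of_nat d) *s (q + w) \<in> nonneg_combs W 1"
    by simp
  moreover have "(1 - 1 / of_nat d) *s q + (1 / of_nat d) *s (q + w) = p"
    using d(1) by (simp add: qs(1) w_def vec_eq_iff field_simps)
  moreover have "nonneg_combs W 1 \<subseteq> {q + s | q s. q \<in> nonneg_combs V 1 \<and> s \<in> dual_cone \<sigma>}"
    unfolding W_def using V(1) qs(3) d(1)
    by (intro nonneg_combs_translate_subset) (auto simp: w_def intro: dual_cone_scale)
  ultimately show thesis
    using that W by simp
qed

lemma sum_mem_scale_poly:
  assumes P: "P = {q + s | q s. q \<in> nonneg_combs V 1 \<and> s \<in> dual_cone \<sigma>}"
    and "0 < k" and y: "\<forall>i<k. y i \<in> scale_poly e P"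
  shows "(\<Sum>i<k. y i) \<in> scale_poly (k * e) P"
proof -
  have "\<forall>i. \<exists>q s. i < k \<longrightarrow> y i = of_nat e *s (q + s) \<and> q \<in> nonneg_combs V 1 \<and> s \<in> dual_cone \<sigma>"
    using y unfolding scale_poly_def P by blast
  then obtain q s where qs: "\<And>i. i < k \<Longrightarrow>
      y i = of_nat e *s (q i + s i) \<and> q i \<in> nonneg_combs V 1 \<and> s i \<in> dual_cone \<sigma>"
    by metis
  define k' :: rat where "k' = 1 / of_nat k"
  have "(\<Sum>i<k. q i) \<in> nonneg_combs V (\<Sum>i<k. 1)"
    using qs by (intro nonneg_combs_sum) auto
  then have "k' *s (\<Sum>i<k. q i) \<in> nonneg_combs V (k' * of_nat k)"
    by (intro nonneg_combs_scale) (auto simp: k'_def)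
  then have "k' *s (\<Sum>i<k. q i) \<in> nonneg_combs V 1"
    using \<open>0 < k\<close> by (simp add: k'_def)
  moreover have "k' *s (\<Sum>i<k. s i) \<in> dual_cone \<sigma>"
    using qs by (intro dual_cone_scale dual_cone_sum) (auto simp: k'_def)
  ultimately have "k' *s (\<Sum>i<k. q i) + k' *s (\<Sum>i<k. s i) \<in> P"
    unfolding P by blast
  moreover have "(\<Sum>i<k. y i) = of_nat (k * e) *s (k' *s (\<Sum>i<k. q i) + k' *s (\<Sum>i<k. s i))"
    using qs \<open>0 < k\<close>
    by (simp add: k'_def vec.scale_sum_right[symmetric] vector_add_ldistrib[symmetric] sum.distrib vector_smult_assoc)
  ultimately show ?thesis
    unfolding scale_poly_def by blast
qed

lemma scale_poly_scale_poly: "scale_poly k (scale_poly e P) = scale_poly (k * e) P"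
  unfolding scale_poly_def image_image by (simp add: vector_smult_assoc mult.commute)

lemma nonneg_combs_subset_scale_poly:
  assumes "0 < e"
  shows "nonneg_combs W (of_nat e) \<subseteq> scale_poly e (nonneg_combs W 1)"
proof
  fix y assume "y \<in> nonneg_combs W (of_nat e)"
  then have "(1 / of_nat e) *s y \<in> nonneg_combs W ((1 / of_nat e) * of_nat e)"
    by (rule nonneg_combs_scale) simp
  then have "(1 / of_nat e) *s y \<in> nonneg_combs W 1"
    using assms by simp
  moreover have "y = of_nat e *s ((1 / of_nat e) *s y)"
    using assms by (simp add: vector_smult_assoc)
  ultimately show "y \<in> scale_poly e (nonneg_combs W 1)"
    unfolding scale_poly_def by (rule rev_image_eqI)
qed

lemma scale_Pol_lattice_point_split:
  fixes V :: "(rat ^ 'n) set"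
  assumes V: "finite V" "V \<subseteq> lattice_pts"
    and P: "P = {q + s | q s. q \<in> nonneg_combs V 1 \<and> s \<in> dual_cone \<sigma>}"
    and e: "1 \<le> e" "CARD('n) \<le> e + 1" and "0 < k"
    and x: "x \<in> scale_poly (k * e) P \<inter> lattice_pts"
  shows "\<exists>z. (\<forall>i<k. z i \<in> scale_poly e P \<inter> lattice_pts) \<and> x = (\<Sum>i<k. z i)"
proof -
  obtain p where "x \<in> lattice_pts" "x = of_nat (k * e) *s p" "p \<in> P"
    using x by (auto simp: scale_poly_def)
  moreover obtain W where W: "finite W" "W \<subseteq> lattice_pts" "p \<in> nonneg_combs W 1"
    "nonneg_combs W 1 \<subseteq> P"
    by (rule Pol_point_in_lattice_polytope[OF V, of p \<sigma>]) (use \<open>p \<in> P\<close> P in auto)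
  ultimately have "x \<in> nonneg_combs W (of_nat (k * e)) \<inter> lattice_pts"
    using nonneg_combs_scale[OF W(3), of "of_nat (k * e)"] by simp
  then have "\<exists>z. (\<forall>i<k. z i \<in> nonneg_combs W (of_nat e) \<inter> lattice_pts) \<and> x = (\<Sum>i<k. z i)"
    using \<open>0 < k\<close> by (intro nonneg_combs_lattice_normal[OF W(1,2) e]) auto
  moreover have "nonneg_combs W (of_nat e) \<subseteq> scale_poly e P"
    using nonneg_combs_subset_scale_poly[of e W] e(1) W(4) by (auto simp: scale_poly_def)
  ultimately show ?thesis
    by blast
qed

theorem theorem3p5p6:
  fixes \<sigma> P :: "(rat ^ 'n) set" and e :: nat
  assumes "polyhedral_cone \<sigma>" and "strongly_convex \<sigma>"
    and "P \<in> Pol \<sigma>"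
    and "e \<ge> 1" and "e \<ge> CARD('n) - 1"
  shows "normal_poly (scale_poly e P)"
proof -
  obtain V where V: "finite V" "V \<subseteq> lattice_pts"
    and P: "P = {q + s | q s. q \<in> nonneg_combs V 1 \<and> s \<in> dual_cone \<sigma>}"
    using assms(3) unfolding Pol_def lattice_polytope_def qconv_hull_eq_nonneg_combs by blast
  have e: "1 \<le> e" "CARD('n) \<le> e + 1"
    using assms(4,5) by auto
  show ?thesis
    unfolding normal_poly_def scale_poly_scale_poly
  proof (intro allI impI equalityI subsetI)
    fix k :: nat and x assume "1 \<le> k" "x \<in> scale_poly (k * e) P \<inter> lattice_pts"
    then have "\<exists>z. (\<forall>i<k. z i \<in> scale_poly e P \<inter> lattice_pts) \<and> x = (\<Sum>i<k. z i)"
      by (intro scale_Pol_lattice_point_split[OF V P e]) auto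
    then show "x \<in> {\<Sum>i<k. m i | m. \<forall>i<k. m i \<in> scale_poly e P \<inter> lattice_pts}"
      by blast
  next
    fix k :: nat and x assume "1 \<le> k" "x \<in> {\<Sum>i<k. m i | m. \<forall>i<k. m i \<in> scale_poly e P \<inter> lattice_pts}"
    then show "x \<in> scale_poly (k * e) P \<inter> lattice_pts"
      using sum_mem_scale_poly[OF P] by (auto intro: lattice_pts_sum)
  qed
qed

end
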